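(* Let $p$ be a mixture of $k$ centered/symmetric log-concave distributions on $\mathbb{R}$, i.e. $p=\sum_{i=1}^k w_i p_i$ with $w_i\ge 0$, $\sum_i w_i=1$, and each $p_i$ a log-concave density that is symmetric about $0$. For $\Delta\in\mathbb{R}$ define $r(x)=\frac{p(x)}{p(x+\Delta)}$ and $t(x)=r(x)-1$. Consider parameters $\tau_{\min},\delta$ with $0<\tau_{\min}\le \min(\frac1k,\frac12)$ and $0<\delta\le \min(\frac{\tau_{\min}^2}{k},\frac12)$. Then there exist universal constants $C_1,C_2,C_3,C_4>0$ such that for any $\tau\in[\tau_{\min},1]$ there exists a collection of $r\le C_1\cdot k\log(1/(\delta\tau_{\min}))$ disjoint intervals $I=I_1\cup\dots\cup I_r$ such that $t(x)\ge C_2\cdot\tau$ for all $x\in I$, and \[ \Pr_{x\sim p}[x\in I]\ \ge\ C_3\cdot \Pr_{x\sim p}[t(x)\ge \tau]\ -\ C_4\cdot \delta k/\tau_{\min}^2 . \]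
   Context: A density $q$ on $\mathbb{R}$ is log-concave if $q=e^{-V}$ for a convex function $V:\mathbb{R}\to\mathbb{R}\cup\{+\infty\}$. "Universal constants" means constants independent of $p,k,\Delta,\tau_{\min},\delta,\tau$. *)

theory Defs
  imports "HOL-Analysis.Analysis" "HOL-Library.Extended_Real"
begin

definition ext_convex :: "(real \<Rightarrow> ereal) \<Rightarrow> bool" where
  "ext_convex V \<longleftrightarrow> (\<forall>x. V x \<noteq> -\<infinity>) \<and>
     (\<forall>x y t. 0 \<le> t \<and> t \<le> 1 \<longrightarrow>
        V ((1 - t) * x + t * y) \<le> ereal (1 - t) * V x + ereal t * V y)"

definition log_concave :: "(real \<Rightarrow> real) \<Rightarrow> bool" where
  "log_concave q \<longleftrightarrow> (\<exists>V. ext_convex V \<and>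
     (\<forall>x. q x = (if V x = \<infinity> then 0 else exp (- real_of_ereal (V x)))))"

definition is_density :: "(real \<Rightarrow> real) \<Rightarrow> bool" where
  "is_density q \<longleftrightarrow> q \<in> borel_measurable borel \<and> (\<forall>x. 0 \<le> q x) \<and>
     integrable lborel q \<and> integral\<^sup>L lborel q = 1"

definition symmetric_fun :: "(real \<Rightarrow> real) \<Rightarrow> bool" where
  "symmetric_fun q \<longleftrightarrow> (\<forall>x. q (- x) = q x)"

definition prob_dens :: "(real \<Rightarrow> real) \<Rightarrow> real set \<Rightarrow> real" where
  "prob_dens p S = measure (density lborel (\<lambda>x. ennreal (p x))) S"

text \<open>t(x) = p(x)/p(x+\<Delta>) - 1, computed in the extended reals (a/0 = \<infinity> for a > 0).\<close>
definition ratio_t :: "(real \<Rightarrow> real) \<Rightarrow> real \<Rightarrow> real \<Rightarrow> ereal" where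
  "ratio_t p \<Delta> x = ereal (p x) / ereal (p (x + \<Delta>)) - 1"

end

theory Submission
  imports Defs
begin

text \<open>
Reflecting through the origin we may assume \<open>\<Delta> \<ge> 0\<close>; then \<open>t(x) \<ge> \<tau>\<close> forces
\<open>x > -\<Delta>/2\<close>. Write \<open>p = \<Sum> q\<^sub>i\<close> with \<open>q\<^sub>i = w\<^sub>i p\<^sub>i\<close>. By log-concavity the gain
\<open>q\<^sub>i(x)/q\<^sub>i(x+\<Delta>)\<close> is nondecreasing on \<open>x > -\<Delta>/2\<close>, so for each of the \<open>O(log(1/\<tau>))\<close>
thresholds \<open>\<theta>\<^sub>j = 2\<^sup>j \<tau>/4\<close> the points where the gain reaches \<open>1 + \<theta>\<^sub>j\<close> form a ray.
With \<open>l\<^sub>i(x)\<close> the largest threshold reached, the mass \<open>f = \<Sum> l\<^sub>i q\<^sub>i\<close> is comparable to the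
drop \<open>p(x) - p(x+\<Delta>)\<close>: \<open>f(x) \<ge> \<tau> p(x)/8\<close> where \<open>t(x) \<ge> \<tau>\<close>, and \<open>t(x) \<ge> \<tau>/32\<close> where
\<open>f(x) \<ge> \<tau> p(x)/16\<close>.

Cut the line by these rays and by rays recording the dyadic scale of \<open>p\<close>, giving
\<open>O(k log(1/(\<delta> \<tau>min)))\<close> cells. On a cell the \<open>l\<^sub>i\<close> are constant, so the points where
\<open>f\<close> is at least \<open>\<tau>/16\<close> times the supremum of \<open>p\<close> over the cell form an interval, on which
\<open>t \<ge> \<tau>/32\<close>. This interval contains every point of the cell with \<open>t \<ge> \<tau>\<close> except the
exceptional points, where no component is both within a factor \<open>2k\<close> of \<open>p\<close> and above \<open>\<delta>\<^sup>2\<close>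
times its own peak; away from those, \<open>p\<close> varies by less than a factor 2 on the cell. A
log-concave density has mass at most \<open>2\<surd>\<eta>\<close> below \<open>\<eta>\<close> times its peak, so the exceptional
points have probability at most \<open>4\<delta>\<close>.
\<close>

section \<open>Densities\<close>

lemma log_concave_nonneg: "log_concave q \<Longrightarrow> 0 \<le> q x"
  unfolding log_concave_def by auto

lemma log_concave_mult_le:
  assumes lc: "log_concave q" and ab: "a \<le> b" and bd: "b \<le> d" and ac: "a \<le> c" and cd: "c \<le> d"
    and s: "b + c = a + d"
  shows "q a * q d \<le> q b * q c"
proof -
  obtain V where cv: "ext_convex V"
    and qV: "\<And>x. q x = (if V x = \<infinity> then 0 else exp (- real_of_ereal (V x)))"
    using lc unfolding log_concave_def by auto
  have finite_below: "\<And>x. V x \<noteq> -\<infinity>"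
    and conv: "\<And>x y t. 0 \<le> t \<Longrightarrow> t \<le> 1 \<Longrightarrow> V ((1 - t) * x + t * y) \<le> ereal (1 - t) * V x + ereal t * V y"
    using cv unfolding ext_convex_def by auto
  show ?thesis
  proof (cases "V a = \<infinity> \<or> V d = \<infinity>")
    case True
    then show ?thesis using qV by auto
  next
    case False
    then obtain A D where A: "V a = ereal A" and D: "V d = ereal D"
      using finite_below by (metis ereal_cases)
    show ?thesis
    proof (cases "a = d")
      case True
      then show ?thesis using ab bd ac cd by auto
    next
      case False
      then have ad: "a < d" using ab bd by auto
      define l where "l = (b - a) / (d - a)"
      have l0: "0 \<le> l" and l1: "l \<le> 1" using ab bd ad by (auto simp: l_def field_simps)
      have "l * (d - a) = b - a" using ad by (simp add: l_def)
      then have bl: "b = (1 - l) * a + l * d" and cl: "c = (1 - (1 - l)) * a + (1 - l) * d"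
        using s by (simp_all add: algebra_simps)
      have Vb: "V b \<le> ereal ((1 - l) * A + l * D)"
        using conv[OF l0 l1, of a d] bl A D by simp
      have Vc: "V c \<le> ereal ((1 - (1 - l)) * A + (1 - l) * D)"
        using conv[of "1 - l" a d] l0 l1 cl A D by simp
      obtain B where B: "V b = ereal B" using Vb finite_below by (cases "V b") auto
      obtain C where C: "V c = ereal C" using Vc finite_below by (cases "V c") auto
      have "B + C \<le> A + D" using Vb Vc B C by (simp add: algebra_simps)
      then show ?thesis using A B C D qV by (simp add: exp_add[symmetric])
    qed
  qed
qed

lemma log_concave_symmetric_antimono:
  assumes lc: "log_concave q" and sy: "symmetric_fun q" and xy: "\<bar>y\<bar> \<le> \<bar>x\<bar>"
  shows "q x \<le> q y"
proof -
  have "q (- \<bar>x\<bar>) * q \<bar>x\<bar> \<le> q y * q (- y)"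
    by (rule log_concave_mult_le[OF lc]) (use xy in auto)
  moreover have "q (- \<bar>x\<bar>) = q x" "q \<bar>x\<bar> = q x" "q (- y) = q y"
    using sy unfolding symmetric_fun_def by (auto simp: abs_if)
  ultimately have "(q x)\<^sup>2 \<le> (q y)\<^sup>2" by (simp add: power2_eq_square)
  then show ?thesis using log_concave_nonneg[OF lc, of y] by (meson power2_le_imp_le)
qed

lemma log_concave_shift_mult_le:
  "log_concave q \<Longrightarrow> x \<le> y \<Longrightarrow> 0 \<le> D \<Longrightarrow> q x * q (y + D) \<le> q (x + D) * q y"
  by (erule log_concave_mult_le) auto

lemma log_concave_midpoint:
  assumes lc: "log_concave q"
  shows "q 0 * q x \<le> (q (x / 2))\<^sup>2"
proof (cases "0 \<le> x")
  case True
  then show ?thesis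
    unfolding power2_eq_square by (intro log_concave_mult_le[OF lc]) auto
next
  case False
  then have "q x * q 0 \<le> q (x / 2) * q (x / 2)" by (intro log_concave_mult_le[OF lc]) auto
  then show ?thesis by (simp add: power2_eq_square mult.commute)
qed

lemma nn_integral_is_density: "is_density q \<Longrightarrow> (\<integral>\<^sup>+x. ennreal (q x) \<partial>lborel) = 1"
  unfolding is_density_def by (simp add: nn_integral_eq_integral)

text \<open>Below the level \<open>\<eta> q(0)\<close> the midpoint inequality gives \<open>q x \<le> \<surd>\<eta> q(x/2)\<close>,
  and \<open>q(x/2)\<close> has total mass 2.\<close>
lemma log_concave_mass_below_peak_fraction:
  assumes d: "is_density q" and lc: "log_concave q" and \<eta>: "0 < \<eta>"
  shows "(\<integral>\<^sup>+x. ennreal (q x * indicator {x. q x < \<eta> * q 0} x) \<partial>lborel) \<le> ennreal (2 * sqrt \<eta>)"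
proof -
  have [measurable]: "q \<in> borel_measurable borel" using d unfolding is_density_def by auto
  have q_nonneg: "\<And>x. 0 \<le> q x" using log_concave_nonneg[OF lc] .
  have pointwise: "q x * indicator {x. q x < \<eta> * q 0} x \<le> sqrt \<eta> * q (x / 2)" for x
  proof (cases "q x < \<eta> * q 0 \<and> 0 < q x")
    case True
    have "q x * q x < (\<eta> * q 0) * q x" using True by (simp add: mult_strict_right_mono)
    also have "\<dots> = \<eta> * (q 0 * q x)" by simp
    also have "\<dots> \<le> \<eta> * (q (x / 2))\<^sup>2" using log_concave_midpoint[OF lc, of x] \<eta> by (simp add: mult_left_mono)
    also have "\<dots> = (sqrt \<eta> * q (x / 2))\<^sup>2" using \<eta> by (simp add: power_mult_distrib)
    finally have "(q x)\<^sup>2 \<le> (sqrt \<eta> * q (x / 2))\<^sup>2" by (simp add: power2_eq_square)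
    then have "q x \<le> sqrt \<eta> * q (x / 2)"
      by (rule power2_le_imp_le) (use \<eta> q_nonneg in simp)
    then show ?thesis using True by simp
  next
    case False
    then have vanishes: "q x * indicator {x. q x < \<eta> * q 0} x = 0"
      using q_nonneg[of x] by (auto simp: indicator_def)
    show ?thesis unfolding vanishes using q_nonneg[of "x / 2"] \<eta> by simp
  qed
  have "(\<integral>\<^sup>+x. ennreal (q x) \<partial>lborel) = ennreal \<bar>1 / 2\<bar> * (\<integral>\<^sup>+x. ennreal (q (0 + (1 / 2) * x)) \<partial>lborel)"
    by (rule nn_integral_real_affine) auto
  then have "ennreal 2 * 1 = (ennreal 2 * ennreal (1 / 2)) * (\<integral>\<^sup>+x. ennreal (q (x / 2)) \<partial>lborel)"
    by (simp add: nn_integral_is_density[OF d] mult.assoc)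
  also have "ennreal 2 * ennreal (1 / 2) = ennreal (2 * (1 / 2))" by (rule ennreal_mult[symmetric]) auto
  finally have half_scaled: "(\<integral>\<^sup>+x. ennreal (q (x / 2)) \<partial>lborel) = 2" by simp
  have "(\<integral>\<^sup>+x. ennreal (q x * indicator {x. q x < \<eta> * q 0} x) \<partial>lborel)
      \<le> (\<integral>\<^sup>+x. ennreal (sqrt \<eta>) * ennreal (q (x / 2)) \<partial>lborel)"
  proof (rule nn_integral_mono)
    fix x
    have "ennreal (sqrt \<eta>) * ennreal (q (x / 2)) = ennreal (sqrt \<eta> * q (x / 2))"
      by (rule ennreal_mult[symmetric]) (use \<eta> q_nonneg in auto)
    then show "ennreal (q x * indicator {x. q x < \<eta> * q 0} x) \<le> ennreal (sqrt \<eta>) * ennreal (q (x / 2))"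
      using pointwise[of x] by (simp add: ennreal_leI)
  qed
  also have "\<dots> = ennreal (sqrt \<eta>) * 2"
    by (simp add: nn_integral_cmult half_scaled)
  also have "\<dots> = ennreal (sqrt \<eta>) * ennreal 2" by simp
  also have "\<dots> = ennreal (sqrt \<eta> * 2)" by (rule ennreal_mult[symmetric]) (use \<eta> in auto)
  also have "\<dots> = ennreal (2 * sqrt \<eta>)" by (simp add: mult.commute)
  finally show ?thesis .
qed

lemma finite_measure_is_density: "is_density q \<Longrightarrow> finite_measure (density lborel (\<lambda>x. ennreal (q x)))"
  by (rule finite_measureI) (simp add: emeasure_density is_density_def nn_integral_is_density)

lemma prob_dens_le_Un:
  assumes "is_density q" and "S \<subseteq> A \<union> B" and "A \<in> sets borel" and "B \<in> sets borel"
  shows "prob_dens q S \<le> prob_dens q A + prob_dens q B"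
proof -
  interpret finite_measure "density lborel (\<lambda>x. ennreal (q x))"
    using assms(1) by (rule finite_measure_is_density)
  have "prob_dens q S \<le> prob_dens q (A \<union> B)"
    unfolding prob_dens_def using assms(2-4) by (intro finite_measure_mono) auto
  also have "\<dots> \<le> prob_dens q A + prob_dens q B"
    unfolding prob_dens_def using assms(3,4) by (intro measure_Un_le) auto
  finally show ?thesis .
qed

lemma ratio_t_ge_iff:
  assumes "\<And>x. 0 \<le> p x" and "0 < c"
  shows "ereal c \<le> ratio_t p \<Delta> x \<longleftrightarrow> 0 < p x \<and> (1 + c) * p (x + \<Delta>) \<le> p x"
proof (cases "p (x + \<Delta>) = 0")
  case True
  then show ?thesis
    using assms by (cases "p x = 0") (simp_all add: ratio_t_def one_ereal_def)
next
  case False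
  then have pos: "0 < p (x + \<Delta>)" using assms(1) less_eq_real_def by auto
  then have "ratio_t p \<Delta> x = ereal (p x / p (x + \<Delta>) - 1)"
    by (simp add: ratio_t_def one_ereal_def)
  moreover have "c \<le> p x / p (x + \<Delta>) - 1 \<longleftrightarrow> (1 + c) * p (x + \<Delta>) \<le> p x"
    using pos by (simp add: field_simps)
  ultimately show ?thesis
    using pos assms(2) by (smt (verit) ereal_less_eq(3) mult_pos_pos)
qed

section \<open>Reflection through the origin\<close>

lemma image_uminus_eq_vimage: "uminus ` A = uminus -` (A :: 'a::group_add set)"
  by (force simp: image_iff)

lemma prob_dens_reflect:
  assumes [measurable]: "q \<in> borel_measurable borel" and sym: "symmetric_fun q"
  shows "prob_dens q (uminus ` S) = prob_dens q S"
proof -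
  have sym': "\<And>x. q (- x) = q x" using sym unfolding symmetric_fun_def ..
  have "uminus \<in> borel_measurable (borel :: real measure)" by measurable
  from measurable_sets[OF this]
  have reflect_sets: "uminus -` A \<in> sets borel" if "A \<in> sets borel" for A :: "real set"
    using that by simp
  show ?thesis
  proof (cases "S \<in> sets borel")
    case True
    have S': "uminus ` S \<in> sets borel" unfolding image_uminus_eq_vimage using reflect_sets[OF True] .
    have "emeasure (density lborel (\<lambda>x. ennreal (q x))) (uminus ` S)
        = (\<integral>\<^sup>+x. ennreal (q x) * indicator (uminus ` S) x \<partial>lborel)"
      using S' by (subst emeasure_density) auto
    also have "\<dots> = ennreal \<bar>-1\<bar> * (\<integral>\<^sup>+x. ennreal (q (0 + (-1) * x)) * indicator (uminus ` S) (0 + (-1) * x) \<partial>lborel)"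
      by (rule nn_integral_real_affine) (use S' in auto)
    also have "\<dots> = (\<integral>\<^sup>+x. ennreal (q x) * indicator S x \<partial>lborel)"
      using sym' by (simp add: indicator_def image_uminus_eq_vimage)
    also have "\<dots> = emeasure (density lborel (\<lambda>x. ennreal (q x))) S"
      using True by (subst emeasure_density) auto
    finally show ?thesis unfolding prob_dens_def measure_def by simp
  next
    case False
    have "uminus ` S \<notin> sets borel"
    proof
      assume "uminus ` S \<in> sets borel"
      then have "uminus -` (uminus ` S) \<in> sets borel" by (rule reflect_sets)
      moreover have "uminus -` (uminus ` S) = S" by force
      ultimately show False using False by simp
    qed
    then show ?thesis using False unfolding prob_dens_def by (simp add: measure_notin_sets)
  qed
qed

lemma ratio_t_reflect: "symmetric_fun p \<Longrightarrow> ratio_t p (- \<Delta>) (- x) = ratio_t p \<Delta> x"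
  unfolding symmetric_fun_def ratio_t_def by (metis minus_add_distrib)

lemma ratio_t_superlevel_reflect:
  assumes "symmetric_fun p"
  shows "{x. c \<le> ratio_t p \<Delta> x} = uminus ` {x. c \<le> ratio_t p (- \<Delta>) x}"
  unfolding image_uminus_eq_vimage using ratio_t_reflect[OF assms] by auto

definition disjoint_intervals :: "nat \<Rightarrow> (nat \<Rightarrow> real set) \<Rightarrow> bool" where
  "disjoint_intervals m J \<longleftrightarrow>
     (\<forall>j<m. is_interval (J j)) \<and> (\<forall>i<m. \<forall>j<m. i \<noteq> j \<longrightarrow> J i \<inter> J j = {})"

lemma disjoint_intervals_reflect:
  assumes "disjoint_intervals m J"
  shows "disjoint_intervals m (\<lambda>j. uminus ` J j)"
proof -
  have "uminus ` A \<inter> uminus ` B = uminus ` (A \<inter> B)" for A B :: "real set"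
    by (simp add: image_Int)
  then show ?thesis using assms unfolding disjoint_intervals_def by simp
qed

section \<open>Cells of a finite family of rays\<close>

definition up_closed :: "'a::order set \<Rightarrow> bool" where
  "up_closed K \<longleftrightarrow> (\<forall>x\<in>K. \<forall>y. x \<le> y \<longrightarrow> y \<in> K)"

definition cell :: "'a set set \<Rightarrow> 'a \<Rightarrow> 'a set" where
  "cell F x = {y. \<forall>K\<in>F. y \<in> K \<longleftrightarrow> x \<in> K}"

lemma cell_self: "x \<in> cell F x"
  unfolding cell_def by simp

lemma mem_cell_iff: "y \<in> cell F x \<Longrightarrow> K \<in> F \<Longrightarrow> y \<in> K \<longleftrightarrow> x \<in> K"
  unfolding cell_def by auto

lemma disjoint_cells: "cell F x \<noteq> cell F y \<Longrightarrow> cell F x \<inter> cell F y = {}"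
  unfolding cell_def by auto

lemma is_interval_cell:
  assumes "\<forall>K\<in>F. up_closed K"
  shows "is_interval (cell F (x::real))"
  unfolding is_interval_1
proof (intro ballI allI impI)
  fix a b z assume a: "a \<in> cell F x" and b: "b \<in> cell F x" and z: "a \<le> z \<and> z \<le> b"
  have "z \<in> K \<longleftrightarrow> x \<in> K" if K: "K \<in> F" for K
  proof
    assume "z \<in> K"
    then have "b \<in> K" using assms K z unfolding up_closed_def by blast
    then show "x \<in> K" using mem_cell_iff[OF b K] by simp
  next
    assume "x \<in> K"
    then have "a \<in> K" using mem_cell_iff[OF a K] by simp
    then show "z \<in> K" using assms K z unfolding up_closed_def by blast
  qed
  then show "z \<in> cell F x" unfolding cell_def by blast
qed

lemma cell_eq_if_card_eq:
  fixes x y :: "'a::linorder"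
  assumes up: "\<forall>K\<in>F. up_closed K" and "finite F"
    and card_eq: "card {K\<in>F. x \<in> K} = card {K\<in>F. y \<in> K}"
  shows "cell F x = cell F y"
proof -
  have same_members: "{K\<in>F. a \<in> K} = {K\<in>F. b \<in> K}"
    if "a \<le> b" "card {K\<in>F. a \<in> K} = card {K\<in>F. b \<in> K}" for a b :: 'a
  proof (rule card_subset_eq)
    show "{K\<in>F. a \<in> K} \<subseteq> {K\<in>F. b \<in> K}"
      using up \<open>a \<le> b\<close> unfolding up_closed_def by blast
  qed (use \<open>finite F\<close> that(2) in auto)
  then have "{K\<in>F. x \<in> K} = {K\<in>F. y \<in> K}"
  proof (cases "x \<le> y")
    case True
    then show ?thesis using same_members card_eq by blast
  next
    case False
    then show ?thesis using same_members[of y x] card_eq by simp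
  qed
  then show ?thesis unfolding cell_def by blast
qed

lemma card_cells_le:
  fixes F :: "'a::linorder set set"
  assumes "\<forall>K\<in>F. up_closed K" and "finite F"
  shows "finite (range (cell F))" and "card (range (cell F)) \<le> card F + 1"
proof -
  define member_count where "member_count x = card {K\<in>F. x \<in> K}" for x
  define cell_of_count where "cell_of_count n = cell F (SOME x. member_count x = n)" for n
  have "range (cell F) \<subseteq> cell_of_count ` {0..card F}"
  proof
    fix Q assume "Q \<in> range (cell F)"
    then obtain x where Q: "Q = cell F x" by auto
    have "member_count (SOME y. member_count y = member_count x) = member_count x"
      by (rule someI) simp
    then have "cell_of_count (member_count x) = Q"
      unfolding cell_of_count_def Q member_count_def by (rule cell_eq_if_card_eq[OF assms])
    moreover have "member_count x \<le> card F"
      unfolding member_count_def using assms(2) by (intro card_mono) auto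
    ultimately show "Q \<in> cell_of_count ` {0..card F}" by force
  qed
  then show "finite (range (cell F))" by (rule finite_subset) simp
  have "card (range (cell F)) \<le> card (cell_of_count ` {0..card F})"
    by (rule card_mono) (simp_all add: \<open>range (cell F) \<subseteq> _\<close>)
  also have "\<dots> \<le> card {0..card F}" by (rule card_image_le) simp
  finally show "card (range (cell F)) \<le> card F + 1" by simp
qed

section \<open>Mixtures of symmetric log-concave densities\<close>

locale lc_mixture =
  fixes k :: nat and w :: "nat \<Rightarrow> real" and ps :: "nat \<Rightarrow> real \<Rightarrow> real"
  assumes k_pos: "1 \<le> k"
    and weights_nonneg: "\<forall>i<k. 0 \<le> w i" and weights_sum: "(\<Sum>i<k. w i) = 1"
    and components: "\<forall>i<k. is_density (ps i) \<and> log_concave (ps i) \<and> symmetric_fun (ps i)"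
begin

definition q :: "nat \<Rightarrow> real \<Rightarrow> real" where
  "q i x = w i * ps i x"

definition p :: "real \<Rightarrow> real" where
  "p = (\<lambda>x. \<Sum>i<k. w i * ps i x)"

lemma p_eq_sum: "p x = (\<Sum>i<k. q i x)"
  unfolding p_def q_def by simp

lemma ps_measurable: "i < k \<Longrightarrow> ps i \<in> borel_measurable borel"
  using components unfolding is_density_def by auto

lemma q_measurable: "i < k \<Longrightarrow> q i \<in> borel_measurable borel"
  unfolding q_def[abs_def] using ps_measurable by simp

lemma p_measurable: "p \<in> borel_measurable borel"
  unfolding p_def using ps_measurable by simp

lemma q_nonneg: "i < k \<Longrightarrow> 0 \<le> q i x"
  unfolding q_def using weights_nonneg components log_concave_nonneg by simp

lemma q_antimono: "i < k \<Longrightarrow> \<bar>y\<bar> \<le> \<bar>x\<bar> \<Longrightarrow> q i x \<le> q i y"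
  unfolding q_def using weights_nonneg components log_concave_symmetric_antimono
  by (simp add: mult_left_mono)

lemma q_le_peak: "i < k \<Longrightarrow> q i x \<le> q i 0"
  by (rule q_antimono) auto

lemma q_shift_mult_le:
  assumes i: "i < k" and "x \<le> y" and "0 \<le> D"
  shows "q i x * q i (y + D) \<le> q i (x + D) * q i y"
proof -
  have "ps i x * ps i (y + D) \<le> ps i (x + D) * ps i y"
    using components i assms(2,3) log_concave_shift_mult_le by blast
  then have "(w i * w i) * (ps i x * ps i (y + D)) \<le> (w i * w i) * (ps i (x + D) * ps i y)"
    by (rule mult_left_mono) simp
  then show ?thesis unfolding q_def by (simp add: algebra_simps)
qed

lemma p_nonneg: "0 \<le> p x"
  unfolding p_eq_sum by (rule sum_nonneg) (simp add: q_nonneg)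

lemma p_antimono: "\<bar>y\<bar> \<le> \<bar>x\<bar> \<Longrightarrow> p x \<le> p y"
  unfolding p_eq_sum by (rule sum_mono) (simp add: q_antimono)

lemma q_le_p: "i < k \<Longrightarrow> q i x \<le> p x"
  unfolding p_eq_sum by (rule member_le_sum) (auto simp: q_nonneg)

lemma symmetric_p: "symmetric_fun p"
  using components unfolding symmetric_fun_def p_def by simp

lemma is_density_p: "is_density p"
proof -
  have integrable: "integrable lborel (ps i)" and integral: "integral\<^sup>L lborel (ps i) = 1" if "i < k" for i
    using components that unfolding is_density_def by auto
  show ?thesis
    unfolding is_density_def
    using p_measurable p_nonneg integrable integral weights_sum unfolding p_def
    by (auto intro!: integrable_sum simp: integral_sum)
qed

end

lemma level_gain_le:
  fixes l a b :: real
  assumes "0 \<le> l" and "l \<le> 1" and "0 \<le> b" and gain: "(1 + l) * b \<le> a"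
  shows "l * a \<le> 2 * (a - b)"
proof -
  have "(2 - l) * ((1 + l) * b) \<le> (2 - l) * a" using gain assms(2) by (intro mult_left_mono) auto
  moreover have "(2 - l) * ((1 + l) * b) = 2 * b + l * (1 - l) * b" by (simp add: algebra_simps)
  moreover have "0 \<le> l * (1 - l) * b" using assms(1-3) by simp
  ultimately show ?thesis by (simp add: algebra_simps)
qed

locale shifted_lc_mixture = lc_mixture +
  fixes \<Delta> \<tau>min \<delta> \<tau> :: real
  assumes shift_nonneg: "0 \<le> \<Delta>"
    and \<tau>min_pos: "0 < \<tau>min" and \<tau>min_le_inverse_k: "\<tau>min \<le> 1 / real k" and \<tau>min_le_half: "\<tau>min \<le> 1/2"
    and \<delta>_pos: "0 < \<delta>" and \<delta>_le_half: "\<delta> \<le> 1/2"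
    and \<tau>_ge: "\<tau>min \<le> \<tau>" and \<tau>_le_1: "\<tau> \<le> 1"
begin

lemma \<tau>_pos: "0 < \<tau>"
  using \<tau>min_pos \<tau>_ge by simp

lemma q_shift_le: "i < k \<Longrightarrow> -\<Delta>/2 < x \<Longrightarrow> q i (x + \<Delta>) \<le> q i x"
  by (rule q_antimono) (use shift_nonneg in auto)

lemma p_shift_ge: "x \<le> -\<Delta>/2 \<Longrightarrow> p x \<le> p (x + \<Delta>)"
  by (rule p_antimono) (use shift_nonneg in auto)

definition threshold :: "nat \<Rightarrow> real" where
  "threshold j = \<tau> / 4 * 2 ^ j"

definition top_level :: nat where
  "top_level = nat \<lceil>log 2 (2 / \<tau>)\<rceil>"

lemma threshold_nonneg: "0 \<le> threshold j"
  unfolding threshold_def using \<tau>_pos by simp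

lemma threshold_mono: "j \<le> j' \<Longrightarrow> threshold j \<le> threshold j'"
  unfolding threshold_def using \<tau>_pos by (simp add: power_increasing)

lemma top_level_bounds: "2 / \<tau> \<le> 2 ^ top_level" "2 ^ top_level < 4 / \<tau>"
proof -
  have "1 \<le> log 2 (2 / \<tau>)" using \<tau>_pos \<tau>_le_1 by (simp add: le_log_iff field_simps)
  then have "(2::real) ^ top_level = 2 powr real_of_int \<lceil>log 2 (2 / \<tau>)\<rceil>"
    unfolding top_level_def by (simp add: powr_realpow[symmetric])
  moreover have "2 / \<tau> = 2 powr (log 2 (2 / \<tau>))" using \<tau>_pos by simp
  moreover have "2 powr (log 2 (2 / \<tau>)) \<le> 2 powr real_of_int \<lceil>log 2 (2 / \<tau>)\<rceil>"
    by (rule powr_mono) auto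
  moreover have "2 powr real_of_int \<lceil>log 2 (2 / \<tau>)\<rceil> < 2 powr (log 2 (2 / \<tau>) + 1)"
    by (rule powr_less_mono) linarith+
  moreover have "2 powr (log 2 (2 / \<tau>) + 1) = 4 / \<tau>" using \<tau>_pos by (simp add: powr_add)
  ultimately show "2 / \<tau> \<le> 2 ^ top_level" "2 ^ top_level < 4 / \<tau>" by simp_all
qed

lemma threshold_top_level: "1/2 \<le> threshold top_level" "threshold top_level < 1"
  using top_level_bounds \<tau>_pos unfolding threshold_def by (auto simp: field_simps)

definition gain_set :: "nat \<Rightarrow> nat \<Rightarrow> real set" where
  "gain_set i j = {x. -\<Delta>/2 < x \<and> (1 + threshold j) * q i (x + \<Delta>) \<le> q i x}"

text \<open>For \<open>-\<Delta>/2 < x \<le> y\<close>, log-concavity gives \<open>q\<^sub>i(x) q\<^sub>i(y+\<Delta>) \<le> q\<^sub>i(x+\<Delta>) q\<^sub>i(y)\<close>,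
  i.e. the gain \<open>q\<^sub>i(x)/q\<^sub>i(x+\<Delta>)\<close> is nondecreasing.\<close>
lemma up_closed_gain_set:
  assumes i: "i < k"
  shows "up_closed (gain_set i j)"
  unfolding up_closed_def
proof (intro ballI allI impI)
  fix x y assume x: "x \<in> gain_set i j" and xy: "x \<le> y"
  have right: "-\<Delta>/2 < x" and gain: "(1 + threshold j) * q i (x + \<Delta>) \<le> q i x"
    using x unfolding gain_set_def by auto
  have "(1 + threshold j) * q i (y + \<Delta>) \<le> q i y"
  proof (cases "0 < q i (x + \<Delta>)")
    case True
    have "q i (x + \<Delta>) * ((1 + threshold j) * q i (y + \<Delta>)) = ((1 + threshold j) * q i (x + \<Delta>)) * q i (y + \<Delta>)"
      by simp
    also have "\<dots> \<le> q i x * q i (y + \<Delta>)" by (rule mult_right_mono[OF gain q_nonneg[OF i]])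
    also have "\<dots> \<le> q i (x + \<Delta>) * q i y" by (rule q_shift_mult_le[OF i xy shift_nonneg])
    finally show ?thesis using True by simp
  next
    case False
    have "q i (y + \<Delta>) \<le> q i (x + \<Delta>)" by (rule q_antimono[OF i]) (use right xy shift_nonneg in auto)
    then have "q i (y + \<Delta>) = 0" using False q_nonneg[OF i, of "y + \<Delta>"] by simp
    then show ?thesis using q_nonneg[OF i, of y] by simp
  qed
  then show "y \<in> gain_set i j" using right xy unfolding gain_set_def by simp
qed

definition level :: "nat \<Rightarrow> real \<Rightarrow> real" where
  "level i x = Max (insert 0 {threshold j | j. j \<le> top_level \<and> x \<in> gain_set i j})"

lemma finite_level_candidates: "finite (insert 0 {threshold j | j. j \<le> top_level \<and> x \<in> gain_set i j})"
  by simp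

lemma level_nonneg: "0 \<le> level i x"
  unfolding level_def by (rule Max_ge[OF finite_level_candidates]) simp

lemma threshold_le_level: "j \<le> top_level \<Longrightarrow> x \<in> gain_set i j \<Longrightarrow> threshold j \<le> level i x"
  unfolding level_def by (rule Max_ge[OF finite_level_candidates]) blast

lemma level_cases: "level i x = 0 \<or> (\<exists>j\<le>top_level. x \<in> gain_set i j \<and> level i x = threshold j)"
proof -
  have "level i x \<in> insert 0 {threshold j | j. j \<le> top_level \<and> x \<in> gain_set i j}"
    unfolding level_def by (rule Max_in[OF finite_level_candidates]) simp
  then show ?thesis by auto
qed

lemma level_le_1: "level i x \<le> 1"
  using level_cases[of i x] threshold_mono threshold_top_level by force

lemma level_gain:
  assumes i: "i < k" and right: "-\<Delta>/2 < x"
  shows "(1 + level i x) * q i (x + \<Delta>) \<le> q i x"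
  using level_cases[of i x] q_shift_le[OF i right] unfolding gain_set_def by auto

text \<open>Consecutive thresholds differ by a factor 2 and the lowest one is \<open>\<tau>/4\<close>.\<close>
lemma gain_le_level:
  assumes i: "i < k" and right: "-\<Delta>/2 < x"
  shows "q i x - q i (x + \<Delta>) \<le> 2 * level i x * q i x + \<tau>/4 * q i x"
proof -
  have q_nonneg': "0 \<le> q i x" "0 \<le> q i (x + \<Delta>)" using q_nonneg[OF i] by auto
  have shift_le: "q i (x + \<Delta>) \<le> q i x" using q_shift_le[OF i right] .
  have error_nonneg: "0 \<le> \<tau>/4 * q i x" using \<tau>_pos q_nonneg' by simp
  have main_nonneg: "0 \<le> 2 * level i x * q i x" using level_nonneg q_nonneg' by simp
  have in_gain_set: "x \<in> gain_set i j \<longleftrightarrow> (1 + threshold j) * q i (x + \<Delta>) \<le> q i x" for j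
    using right unfolding gain_set_def by simp
  consider "x \<notin> gain_set i 0" | "x \<in> gain_set i top_level"
    | j where "j < top_level" "x \<in> gain_set i j" "x \<notin> gain_set i (Suc j)"
    using ex_least_nat_less[of "\<lambda>j. x \<notin> gain_set i j" top_level] by blast
  then show ?thesis
  proof cases
    case 1
    then have "q i x - q i (x + \<Delta>) < \<tau>/4 * q i (x + \<Delta>)"
      using in_gain_set by (simp add: threshold_def algebra_simps)
    also have "\<dots> \<le> \<tau>/4 * q i x" using shift_le \<tau>_pos by simp
    finally show ?thesis using main_nonneg by linarith
  next
    case 2
    then have "1/2 \<le> level i x" using threshold_le_level[of top_level x i] threshold_top_level by simp
    then have "q i x \<le> 2 * level i x * q i x" using q_nonneg' by (simp add: mult_right_mono[of 1 _ "q i x", simplified])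
    then show ?thesis using error_nonneg q_nonneg' by linarith
  next
    case (3 j)
    have "q i x < (1 + 2 * threshold j) * q i (x + \<Delta>)"
      using 3 in_gain_set by (simp add: threshold_def not_le)
    then have "q i x - q i (x + \<Delta>) < 2 * threshold j * q i (x + \<Delta>)" by (simp add: algebra_simps)
    also have "\<dots> \<le> 2 * level i x * q i x"
      using threshold_le_level[of j x i] 3 shift_le q_nonneg' threshold_nonneg[of j]
      by (intro mult_mono) auto
    finally show ?thesis using error_nonneg by linarith
  qed
qed

section \<open>The cover by cores of cells\<close>

definition level_mass :: "real \<Rightarrow> real" where
  "level_mass x = (\<Sum>i<k. level i x * q i x)"

definition \<eta> :: real where
  "\<eta> = \<delta>\<^sup>2"

lemma \<eta>_pos: "0 < \<eta>"
  unfolding \<eta>_def using \<delta>_pos by simp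

text \<open>At a non-exceptional point \<open>p\<close> is within a factor \<open>2k\<close> of some \<open>q\<^sub>i\<close>, which lies
  between \<open>\<eta> q\<^sub>i(0)\<close> and \<open>q\<^sub>i(0)\<close>; these are the dyadic scales of \<open>p\<close> that can occur there.\<close>
definition scales :: "int set" where
  "scales = (\<Union>i\<in>{i. i < k \<and> 0 < q i 0}. {\<lceil>log 2 (\<eta> * q i 0)\<rceil> .. \<lceil>log 2 (2 * real k * q i 0)\<rceil>})"

definition sublevel_right :: "int \<Rightarrow> real set" where
  "sublevel_right n = {x. 0 < x \<and> p x \<le> 2 powr n}"

definition superlevel_or_right :: "int \<Rightarrow> real set" where
  "superlevel_or_right n = {x. 0 < x \<or> 2 powr n < p x}"

text \<open>On a cell of \<open>rays\<close> with a scale \<open>n \<in> scales\<close> the bound \<open>p \<le> 2 powr n\<close> is inherited: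
  through \<open>sublevel_right n\<close> for cells in \<open>x > 0\<close>, through \<open>superlevel_or_right n\<close> for
  cells in \<open>x \<le> 0\<close>.\<close>
definition rays :: "real set set" where
  "rays = (\<lambda>(i, j). gain_set i j) ` ({..<k} \<times> {..top_level}) \<union> sublevel_right ` scales
     \<union> superlevel_or_right ` scales"

definition core :: "real set \<Rightarrow> real set" where
  "core Q = {x\<in>Q. -\<Delta>/2 < x \<and> 0 < p x \<and> (\<forall>y\<in>Q. \<tau>/16 * p y \<le> level_mass x)}"

definition exceptional :: "real set" where
  "exceptional = {x. \<not> (\<exists>i<k. p x \<le> 2 * real k * q i x \<and> \<eta> * q i 0 \<le> q i x)}"

lemma finite_scales: "finite scales"
  unfolding scales_def by auto

lemma finite_rays: "finite rays"
  unfolding rays_def using finite_scales by auto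

lemma up_closed_rays: "\<forall>K\<in>rays. up_closed K"
proof -
  have "up_closed (sublevel_right n)" for n
    unfolding up_closed_def sublevel_right_def
    using p_antimono by (smt (verit) mem_Collect_eq)
  moreover have "up_closed (superlevel_or_right n)" for n
    unfolding up_closed_def superlevel_or_right_def
    using p_antimono by (smt (verit) mem_Collect_eq)
  ultimately show ?thesis
    unfolding rays_def using up_closed_gain_set by auto
qed

lemma level_cell:
  assumes "y \<in> cell rays x" and "i < k"
  shows "level i y = level i x"
proof -
  have "gain_set i j \<in> rays" if "j \<le> top_level" for j
    unfolding rays_def using assms(2) that by force
  then have "{threshold j | j. j \<le> top_level \<and> y \<in> gain_set i j}
      = {threshold j | j. j \<le> top_level \<and> x \<in> gain_set i j}"
    using mem_cell_iff[OF assms(1)] by blast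
  then show ?thesis unfolding level_def by simp
qed

lemma level_mass_antimono:
  assumes "\<forall>i<k. level i z = level i x" and "\<bar>z\<bar> \<le> \<bar>x\<bar>"
  shows "level_mass x \<le> level_mass z"
  unfolding level_mass_def
  using assms q_antimono level_nonneg by (intro sum_mono) (simp add: mult_left_mono)

text \<open>On a cell the levels are constant, so \<open>level_mass\<close> and \<open>p\<close> decrease in \<open>\<bar>x\<bar>\<close>;
  every point between two points of the core is therefore dominated by one of them.\<close>
lemma is_interval_core: "is_interval (core (cell rays x))"
  unfolding is_interval_1
proof (intro ballI allI impI)
  fix a b z assume a: "a \<in> core (cell rays x)" and b: "b \<in> core (cell rays x)" and z: "a \<le> z \<and> z \<le> b"
  have "a \<in> cell rays x" "b \<in> cell rays x" using a b unfolding core_def by auto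
  then have z_cell: "z \<in> cell rays x"
    using is_interval_cell[OF up_closed_rays] z unfolding is_interval_1 by blast
  obtain e where e: "e \<in> core (cell rays x)" "\<bar>z\<bar> \<le> \<bar>e\<bar>" "e \<in> cell rays x"
  proof (cases "0 < z")
    case True
    then show ?thesis using that[of b] b z unfolding core_def by auto
  next
    case False
    then show ?thesis using that[of a] a z unfolding core_def by auto
  qed
  have same_levels: "\<forall>i<k. level i z = level i e"
    using level_cell[OF z_cell] level_cell[OF e(3)] by simp
  have "0 < p z" using e p_antimono[OF e(2)] unfolding core_def by fastforce
  moreover have "\<tau>/16 * p y \<le> level_mass z" if "y \<in> cell rays x" for y
    using e that level_mass_antimono[OF same_levels e(2)] unfolding core_def by fastforce
  ultimately show "z \<in> core (cell rays x)"
    using z_cell a z unfolding core_def by auto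
qed

lemma ratio_t_core:
  assumes x: "x \<in> core Q"
  shows "ereal (\<tau>/32) \<le> ratio_t p \<Delta> x"
proof -
  have right: "-\<Delta>/2 < x" and pos: "0 < p x" and mass: "\<tau>/16 * p x \<le> level_mass x"
    using x unfolding core_def by auto
  have "level_mass x \<le> (\<Sum>i<k. 2 * (q i x - q i (x + \<Delta>)))"
    unfolding level_mass_def
    using level_gain_le[OF level_nonneg level_le_1 q_nonneg level_gain[OF _ right]]
    by (intro sum_mono) simp
  also have "\<dots> = 2 * (p x - p (x + \<Delta>))"
    unfolding p_eq_sum by (simp add: sum_distrib_left sum_subtractf)
  finally have "p (x + \<Delta>) \<le> (1 - \<tau>/32) * p x"
    using mass by (simp add: algebra_simps)
  then have "(1 + \<tau>/32) * p (x + \<Delta>) \<le> (1 + \<tau>/32) * ((1 - \<tau>/32) * p x)"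
    using \<tau>_pos by (intro mult_left_mono) auto
  also have "\<dots> \<le> p x"
    using p_nonneg[of x] \<tau>_pos by (simp add: algebra_simps)
  finally show ?thesis
    using ratio_t_ge_iff[OF p_nonneg, of "\<tau>/32"] \<tau>_pos pos by simp
qed

lemma level_mass_ge_of_ratio_t:
  assumes t: "ereal \<tau> \<le> ratio_t p \<Delta> x"
  shows "-\<Delta>/2 < x" and "0 < p x" and "\<tau>/8 * p x \<le> level_mass x"
proof -
  have pos: "0 < p x" and gain: "(1 + \<tau>) * p (x + \<Delta>) \<le> p x"
    using t ratio_t_ge_iff[OF p_nonneg \<tau>_pos] by auto
  show "0 < p x" by (rule pos)
  show right: "-\<Delta>/2 < x"
  proof (rule ccontr)
    assume "\<not> -\<Delta>/2 < x"
    then have "(1 + \<tau>) * p x \<le> (1 + \<tau>) * p (x + \<Delta>)"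
      using p_shift_ge \<tau>_pos by (intro mult_left_mono) auto
    then have "\<tau> * p x \<le> 0" using gain by (simp add: algebra_simps)
    then show False using mult_pos_pos[OF \<tau>_pos pos] by linarith
  qed
  have "p x - p (x + \<Delta>) = (\<Sum>i<k. q i x - q i (x + \<Delta>))"
    unfolding p_eq_sum by (simp add: sum_subtractf)
  also have "\<dots> \<le> (\<Sum>i<k. 2 * level i x * q i x + \<tau>/4 * q i x)"
    by (rule sum_mono) (use gain_le_level right in auto)
  also have "\<dots> = 2 * level_mass x + \<tau>/4 * p x"
    unfolding level_mass_def p_eq_sum by (simp add: sum.distrib sum_distrib_left mult.assoc)
  finally have "p x - p (x + \<Delta>) \<le> 2 * level_mass x + \<tau>/4 * p x" .
  moreover have "\<tau> * p x \<le> 2 * (p x - p (x + \<Delta>))"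
  proof -
    have "\<tau> * p x \<le> (1 + \<tau>) * (p x - p (x + \<Delta>))" using gain by (simp add: algebra_simps)
    also have "\<dots> \<le> 2 * (p x - p (x + \<Delta>))"
    proof (rule mult_right_mono)
      have "p (x + \<Delta>) \<le> (1 + \<tau>) * p (x + \<Delta>)" using \<tau>_pos p_nonneg[of "x + \<Delta>"] by (simp add: algebra_simps)
      then show "0 \<le> p x - p (x + \<Delta>)" using gain by linarith
    qed (use \<tau>_le_1 in simp)
    finally show ?thesis .
  qed
  ultimately show "\<tau>/8 * p x \<le> level_mass x" by simp
qed

lemma dyadic_scale_mem_scales:
  assumes x: "x \<notin> exceptional" and pos: "0 < p x"
  shows "\<lceil>log 2 (p x)\<rceil> \<in> scales"
proof -
  obtain i where i: "i < k" and dominant: "p x \<le> 2 * real k * q i x" and high: "\<eta> * q i 0 \<le> q i x"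
    using x unfolding exceptional_def by auto
  have "0 < q i x" using dominant pos q_nonneg[OF i, of x] by (auto simp: order.order_iff_strict)
  then have peak_pos: "0 < q i 0" using q_le_peak[OF i, of x] by simp
  have "log 2 (\<eta> * q i 0) \<le> log 2 (p x)"
    using high q_le_p[OF i, of x] \<eta>_pos peak_pos pos by simp
  moreover have "p x \<le> 2 * real k * q i 0"
    using dominant q_le_peak[OF i, of x] by (smt (verit) mult_left_mono of_nat_0_le_iff)
  then have "log 2 (p x) \<le> log 2 (2 * real k * q i 0)" using pos by simp
  ultimately show ?thesis
    unfolding scales_def using i peak_pos by (auto intro: ceiling_mono)
qed

lemma p_cell_le:
  assumes x: "x \<notin> exceptional" and pos: "0 < p x" and y: "y \<in> cell rays x"
  shows "p y \<le> 2 * p x"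
proof -
  define n where "n = \<lceil>log 2 (p x)\<rceil>"
  have n: "n \<in> scales" unfolding n_def using dyadic_scale_mem_scales[OF x pos] .
  have "p x = 2 powr (log 2 (p x))" using pos by simp
  also have "\<dots> \<le> 2 powr n" unfolding n_def by (rule powr_mono) auto
  finally have px_le: "p x \<le> 2 powr n" .
  have "2 powr n < 2 powr (log 2 (p x) + 1)"
    unfolding n_def by (rule powr_less_mono) linarith+
  also have "\<dots> = 2 * p x" using pos by (simp add: powr_add)
  finally have scale_lt: "2 powr n < 2 * p x" .
  have "p y \<le> 2 powr n"
  proof (cases "0 < x")
    case True
    have "sublevel_right n \<in> rays" using n unfolding rays_def by auto
    then show ?thesis
      using mem_cell_iff[OF y] True px_le unfolding sublevel_right_def by blast
  next
    case False
    have "superlevel_or_right n \<in> rays" using n unfolding rays_def by auto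
    moreover have "x \<notin> superlevel_or_right n"
      using False px_le unfolding superlevel_or_right_def by simp
    ultimately have "y \<notin> superlevel_or_right n" using mem_cell_iff[OF y] by blast
    then show ?thesis unfolding superlevel_or_right_def by simp
  qed
  then show ?thesis using scale_lt by simp
qed

lemma mem_core_cell:
  assumes t: "ereal \<tau> \<le> ratio_t p \<Delta> x" and x: "x \<notin> exceptional"
  shows "x \<in> core (cell rays x)"
proof -
  note right = level_mass_ge_of_ratio_t(1)[OF t] and pos = level_mass_ge_of_ratio_t(2)[OF t]
  have "\<tau>/16 * p y \<le> level_mass x" if "y \<in> cell rays x" for y
  proof -
    have "\<tau>/16 * p y \<le> \<tau>/16 * (2 * p x)"
      using p_cell_le[OF x pos that] \<tau>_pos by (intro mult_left_mono) auto
    then show ?thesis using level_mass_ge_of_ratio_t(3)[OF t] by simp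
  qed
  then show ?thesis unfolding core_def using cell_self right pos by auto
qed

lemma exceptional_sets: "exceptional \<in> sets borel"
proof -
  have "exceptional = UNIV - (\<Union>i<k. {x. p x \<le> 2 * real k * q i x} \<inter> {x. \<eta> * q i 0 \<le> q i x})"
    unfolding exceptional_def by auto
  also have "\<dots> \<in> sets borel"
    using q_measurable p_measurable by (intro sets.Diff sets.finite_UN sets.Int) auto
  finally show ?thesis .
qed

definition low_part :: "nat \<Rightarrow> real \<Rightarrow> real" where
  "low_part i x = ps i x * indicator {x. ps i x < \<eta> * ps i 0} x"

text \<open>At an exceptional point each component is either below \<open>\<eta>\<close> times its peak or
  below \<open>p/(2k)\<close>; the latter ones carry at most half of \<open>p\<close>.\<close>
lemma exceptional_le_low_parts:
  assumes x: "x \<in> exceptional"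
  shows "p x \<le> (\<Sum>i<k. 2 * w i * low_part i x)"
proof -
  have split: "q i x \<le> q i x * indicator {x. q i x < \<eta> * q i 0} x + p x / (2 * real k)" if i: "i < k" for i
  proof (cases "q i x < \<eta> * q i 0")
    case True
    then show ?thesis using p_nonneg[of x] by simp
  next
    case False
    then have "\<not> p x \<le> 2 * real k * q i x" using x i unfolding exceptional_def by (auto simp: not_less)
    then show ?thesis using False k_pos by (simp add: field_simps)
  qed
  have low_eq: "q i x * indicator {x. q i x < \<eta> * q i 0} x = w i * low_part i x" if i: "i < k" for i
  proof (cases "w i = 0")
    case False
    then have "0 < w i" using weights_nonneg i by (simp add: less_le)
    then have "q i x < \<eta> * q i 0 \<longleftrightarrow> ps i x < \<eta> * ps i 0"
      unfolding q_def by (simp add: mult.left_commute[of \<eta>])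
    then show ?thesis by (simp add: q_def low_part_def indicator_def)
  qed (simp add: q_def)
  have "p x = (\<Sum>i<k. q i x)" by (rule p_eq_sum)
  also have "\<dots> \<le> (\<Sum>i<k. q i x * indicator {x. q i x < \<eta> * q i 0} x + p x / (2 * real k))"
    by (rule sum_mono) (use split in auto)
  also have "\<dots> = (\<Sum>i<k. w i * low_part i x) + p x / 2"
    using k_pos low_eq by (simp add: sum.distrib)
  finally show ?thesis by (simp add: sum_distrib_left[symmetric] mult.assoc)
qed

lemma prob_dens_exceptional_le: "prob_dens p exceptional \<le> 4 * \<delta>"
proof -
  have low_nonneg: "0 \<le> low_part i x" if "i < k" for i x
    unfolding low_part_def using components that log_concave_nonneg by simp
  have low_measurable: "low_part i \<in> borel_measurable borel" if i: "i < k" for i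
  proof -
    have "{x. ps i x < \<eta> * ps i 0} \<in> sets borel" using ps_measurable[OF i] by measurable
    then show ?thesis unfolding low_part_def[abs_def] using ps_measurable[OF i] by simp
  qed
  have low_mass: "(\<integral>\<^sup>+x. ennreal (low_part i x) \<partial>lborel) \<le> ennreal (2 * \<delta>)" if "i < k" for i
    using log_concave_mass_below_peak_fraction[of "ps i" \<eta>] components that \<eta>_pos \<delta>_pos
    unfolding low_part_def \<eta>_def by simp
  have "emeasure (density lborel (\<lambda>x. ennreal (p x))) exceptional
      = (\<integral>\<^sup>+x. ennreal (p x) * indicator exceptional x \<partial>lborel)"
    using exceptional_sets p_measurable by (subst emeasure_density) auto
  also have "\<dots> \<le> (\<integral>\<^sup>+x. (\<Sum>i<k. ennreal (2 * w i) * ennreal (low_part i x)) \<partial>lborel)"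
  proof (rule nn_integral_mono)
    fix x
    have "(\<Sum>i<k. ennreal (2 * w i) * ennreal (low_part i x)) = (\<Sum>i<k. ennreal (2 * w i * low_part i x))"
      by (rule sum.cong) (use weights_nonneg low_nonneg in \<open>auto simp: ennreal_mult\<close>)
    also have "\<dots> = ennreal (\<Sum>i<k. 2 * w i * low_part i x)"
      by (rule sum_ennreal) (use weights_nonneg low_nonneg in auto)
    finally have sum_eq: "(\<Sum>i<k. ennreal (2 * w i) * ennreal (low_part i x)) = ennreal (\<Sum>i<k. 2 * w i * low_part i x)" .
    then show "ennreal (p x) * indicator exceptional x \<le> (\<Sum>i<k. ennreal (2 * w i) * ennreal (low_part i x))"
      unfolding sum_eq using exceptional_le_low_parts[of x] by (cases "x \<in> exceptional") (simp_all add: ennreal_leI)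
  qed
  also have "\<dots> = (\<Sum>i<k. ennreal (2 * w i) * (\<integral>\<^sup>+x. ennreal (low_part i x) \<partial>lborel))"
    by (subst nn_integral_sum) (use low_measurable in \<open>auto simp: nn_integral_cmult\<close>)
  also have "\<dots> \<le> (\<Sum>i<k. ennreal (2 * w i) * ennreal (2 * \<delta>))"
    using low_mass by (intro sum_mono mult_left_mono) auto
  also have "\<dots> = (\<Sum>i<k. ennreal (4 * \<delta> * w i))"
    by (rule sum.cong) (use weights_nonneg \<delta>_pos in \<open>auto simp: mult_ac simp flip: ennreal_mult\<close>)
  also have "\<dots> = ennreal (4 * \<delta> * (\<Sum>i<k. w i))"
    by (subst sum_ennreal) (use weights_nonneg \<delta>_pos in \<open>auto simp: sum_distrib_left\<close>)
  finally show ?thesis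
    unfolding prob_dens_def measure_def using weights_sum \<delta>_pos by (simp add: enn2real_leI)
qed

section \<open>Counting the cells\<close>

lemma log_inverse_\<tau>min_ge_1: "1 \<le> log 2 (1 / \<tau>min)"
  using \<tau>min_pos \<tau>min_le_half by (simp add: le_log_iff field_simps)

lemma log_inverse_\<delta>_ge_1: "1 \<le> log 2 (1 / \<delta>)"
  using \<delta>_pos \<delta>_le_half by (simp add: le_log_iff field_simps)

lemma top_level_le: "real top_level \<le> 2 + log 2 (1 / \<tau>min)"
proof -
  have "log 2 (2 / \<tau>) \<le> log 2 (2 / \<tau>min)" using \<tau>min_pos \<tau>_ge by (simp add: frac_le)
  moreover have "0 \<le> log 2 (2 / \<tau>)" using \<tau>_pos \<tau>_le_1 by simp
  ultimately have "real top_level \<le> log 2 (2 / \<tau>min) + 1" unfolding top_level_def by linarith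
  then show ?thesis using \<tau>min_pos by (simp add: log_divide)
qed

lemma card_scales_le: "real (card scales) \<le> real k * (3 + log 2 (1 / \<tau>min) + 2 * log 2 (1 / \<delta>))"
proof -
  define I where "I = {i. i < k \<and> 0 < q i 0}"
  define L where "L = 3 + log 2 (1 / \<tau>min) + 2 * log 2 (1 / \<delta>)"
  have L_nonneg: "0 \<le> L"
    unfolding L_def using log_inverse_\<tau>min_ge_1 log_inverse_\<delta>_ge_1 by simp
  have log_2k: "log 2 (2 * real k) \<le> 1 + log 2 (1 / \<tau>min)"
  proof -
    have "2 * real k \<le> 2 / \<tau>min"
      using \<tau>min_le_inverse_k \<tau>min_pos k_pos by (simp add: field_simps)
    then have "log 2 (2 * real k) \<le> log 2 (2 / \<tau>min)" using k_pos \<tau>min_pos by simp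
    then show ?thesis using \<tau>min_pos by (simp add: log_divide)
  qed
  have log_\<eta>: "log 2 \<eta> = - 2 * log 2 (1 / \<delta>)"
    unfolding \<eta>_def using \<delta>_pos by (simp add: log_nat_power log_divide)
  have each: "real (card {\<lceil>log 2 (\<eta> * q i 0)\<rceil> .. \<lceil>log 2 (2 * real k * q i 0)\<rceil>}) \<le> L" if i: "i \<in> I" for i
  proof -
    have "0 < q i 0" using i unfolding I_def by simp
    then have "log 2 (2 * real k * q i 0) - log 2 (\<eta> * q i 0) = log 2 (2 * real k) - log 2 \<eta>"
      using k_pos \<eta>_pos by (simp add: log_mult)
    then have "real_of_int (\<lceil>log 2 (2 * real k * q i 0)\<rceil> + 1 - \<lceil>log 2 (\<eta> * q i 0)\<rceil>) \<le> L"
      unfolding L_def using log_2k log_\<eta>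
      by (smt (verit, best) ceiling_correct le_of_int_ceiling of_int_add of_int_diff of_int_1)
    then show ?thesis using L_nonneg by (simp add: card_atLeastAtMost_int)
  qed
  have "card scales \<le> (\<Sum>i\<in>I. card {\<lceil>log 2 (\<eta> * q i 0)\<rceil> .. \<lceil>log 2 (2 * real k * q i 0)\<rceil>})"
    unfolding scales_def I_def[symmetric] by (rule card_UN_le) (simp add: I_def)
  then have "real (card scales) \<le> (\<Sum>i\<in>I. real (card {\<lceil>log 2 (\<eta> * q i 0)\<rceil> .. \<lceil>log 2 (2 * real k * q i 0)\<rceil>}))"
    by (simp flip: of_nat_sum)
  also have "\<dots> \<le> (\<Sum>i\<in>I. L)" by (rule sum_mono) (rule each)
  also have "\<dots> \<le> real k * L"
  proof -
    have "card I \<le> k" unfolding I_def using card_mono[of "{..<k}"] by (simp add: subset_eq)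
    then show ?thesis using L_nonneg by (simp add: mult_right_mono)
  qed
  finally show ?thesis unfolding L_def .
qed

lemma card_rays_le: "card rays \<le> k * (top_level + 1) + 2 * card scales"
proof -
  have "card rays \<le> card ((\<lambda>(i, j). gain_set i j) ` ({..<k} \<times> {..top_level}) \<union> sublevel_right ` scales)
      + card (superlevel_or_right ` scales)"
    unfolding rays_def by (rule card_Un_le)
  moreover have "card ((\<lambda>(i, j). gain_set i j) ` ({..<k} \<times> {..top_level}) \<union> sublevel_right ` scales)
      \<le> card ((\<lambda>(i, j). gain_set i j) ` ({..<k} \<times> {..top_level})) + card (sublevel_right ` scales)"
    by (rule card_Un_le)
  moreover have "card ((\<lambda>(i, j). gain_set i j) ` ({..<k} \<times> {..top_level})) \<le> k * (top_level + 1)"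
    using card_image_le[of "{..<k} \<times> {..top_level}"] by (simp add: card_cartesian_product)
  moreover have "card (sublevel_right ` scales) \<le> card scales" "card (superlevel_or_right ` scales) \<le> card scales"
    using finite_scales by (auto intro: card_image_le)
  ultimately show ?thesis by linarith
qed

lemma card_cells_rays_le: "real (card (range (cell rays))) \<le> 20 * real k * ln (1 / (\<delta> * \<tau>min))"
proof -
  define A where "A = log 2 (1 / \<tau>min)"
  define B where "B = log 2 (1 / \<delta>)"
  have A: "1 \<le> A" and B: "1 \<le> B" unfolding A_def B_def
    using log_inverse_\<tau>min_ge_1 log_inverse_\<delta>_ge_1 .
  have k: "1 \<le> real k" using k_pos by simp
  have "card (range (cell rays)) \<le> k * (top_level + 1) + 2 * card scales + 1"
    using card_cells_le(2)[OF up_closed_rays finite_rays] card_rays_le by linarith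
  then have "real (card (range (cell rays))) \<le> real (k * (top_level + 1) + 2 * card scales + 1)"
    by (rule of_nat_mono)
  also have "\<dots> = real k * (real top_level + 1) + 2 * real (card scales) + 1" by (simp add: algebra_simps)
  also have "\<dots> \<le> real k * (A + 3) + 2 * (real k * (3 + A + 2 * B)) + 1"
  proof -
    have "real k * (real top_level + 1) \<le> real k * (A + 3)"
      using top_level_le unfolding A_def by (intro mult_left_mono) auto
    then show ?thesis using card_scales_le unfolding A_def B_def by linarith
  qed
  also have "\<dots> \<le> real k * (12 + 4 * A + 4 * B)"
  proof -
    have "0 \<le> real k * A" using A by simp
    then show ?thesis using k by (simp add: algebra_simps)
  qed
  also have "\<dots> \<le> real k * (20 * ln 2 * (A + B))"
  proof -
    have "40/3 * (A + B) \<le> 20 * ln 2 * (A + B)"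
      using ln2_ge_two_thirds A B by (intro mult_right_mono) auto
    moreover have "40/3 * (A + B) = 40/3 * A + 40/3 * B" by (simp add: algebra_simps)
    ultimately have "12 + 4 * A + 4 * B \<le> 20 * ln 2 * (A + B)" using A B by linarith
    then show ?thesis using k by (intro mult_left_mono) auto
  qed
  also have "\<dots> = 20 * real k * ln (1 / (\<delta> * \<tau>min))"
    unfolding A_def B_def log_def using \<delta>_pos \<tau>min_pos
    by (simp add: ln_mult ln_div algebra_simps)
  finally show ?thesis .
qed

lemma interval_cover_nonneg_shift:
  "\<exists>m J. real m \<le> 20 * real k * ln (1 / (\<delta> * \<tau>min)) \<and> disjoint_intervals m J \<and>
     (\<forall>x\<in>(\<Union>j<m. J j). ereal (\<tau> / 32) \<le> ratio_t p \<Delta> x) \<and>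
     prob_dens p {x. ereal \<tau> \<le> ratio_t p \<Delta> x} \<le> prob_dens p (\<Union>j<m. J j) + 4 * \<delta>"
proof -
  define m where "m = card (range (cell rays))"
  obtain h where h: "bij_betw h {0..<m} (range (cell rays))"
    unfolding m_def using ex_bij_betw_nat_finite[OF card_cells_le(1)[OF up_closed_rays finite_rays]] by blast
  define J where "J j = core (h j)" for j
  have h_cell: "\<exists>x. h j = cell rays x" if "j < m" for j
    using bij_betwE[OF h] that by (metis atLeastLessThan_iff rangeE zero_le)
  have intervals: "disjoint_intervals m J"
    unfolding disjoint_intervals_def
  proof (intro conjI allI impI)
    fix j assume "j < m"
    then show "is_interval (J j)" unfolding J_def using h_cell is_interval_core by force
  next
    fix i j assume "i < m" "j < m" "i \<noteq> j"
    then have "h i \<inter> h j = {}"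
      using h_cell disjoint_cells bij_betw_imp_inj_on[OF h] unfolding inj_on_def
      by (metis atLeastLessThan_iff zero_le)
    then show "J i \<inter> J j = {}" unfolding J_def core_def by auto
  qed
  have cover: "{x. ereal \<tau> \<le> ratio_t p \<Delta> x} \<subseteq> (\<Union>j<m. J j) \<union> exceptional"
  proof
    fix x assume t: "x \<in> {x. ereal \<tau> \<le> ratio_t p \<Delta> x}"
    show "x \<in> (\<Union>j<m. J j) \<union> exceptional"
    proof (cases "x \<in> exceptional")
      case False
      obtain j where "j < m" "h j = cell rays x"
        using bij_betw_imp_surj_on[OF h] by (metis atLeastLessThan_iff imageE rangeI)
      then have "x \<in> J j" using mem_core_cell[OF _ False] t unfolding J_def by auto
      then show ?thesis using \<open>j < m\<close> by blast
    qed simp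
  qed
  have "(\<Union>j<m. J j) \<in> sets borel"
    using intervals real_interval_borel_measurable
    unfolding disjoint_intervals_def by (intro sets.finite_UN) auto
  then have "prob_dens p {x. ereal \<tau> \<le> ratio_t p \<Delta> x} \<le> prob_dens p (\<Union>j<m. J j) + 4 * \<delta>"
    using prob_dens_le_Un[OF is_density_p cover _ exceptional_sets] prob_dens_exceptional_le
    by linarith
  moreover have "\<forall>x\<in>(\<Union>j<m. J j). ereal (\<tau> / 32) \<le> ratio_t p \<Delta> x"
    unfolding J_def using ratio_t_core by blast
  ultimately show ?thesis
    using card_cells_rays_le intervals unfolding m_def[symmetric] by blast
qed

end

context lc_mixture
begin

lemma interval_cover:
  assumes "0 < \<tau>min" "\<tau>min \<le> 1 / real k" "\<tau>min \<le> 1/2" "0 < \<delta>" "\<delta> \<le> 1/2" "\<tau>min \<le> \<tau>" "\<tau> \<le> 1"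
  shows "\<exists>m J. real m \<le> 20 * real k * ln (1 / (\<delta> * \<tau>min)) \<and> disjoint_intervals m J \<and>
     (\<forall>x\<in>(\<Union>j<m. J j). ereal (\<tau> / 32) \<le> ratio_t p \<Delta> x) \<and>
     prob_dens p {x. ereal \<tau> \<le> ratio_t p \<Delta> x} \<le> prob_dens p (\<Union>j<m. J j) + 4 * \<delta>"
proof (cases "0 \<le> \<Delta>")
  case True
  interpret shifted_lc_mixture k w ps \<Delta> \<tau>min \<delta> \<tau>
    using True assms by unfold_locales
  show ?thesis by (rule interval_cover_nonneg_shift)
next
  case False
  interpret shifted_lc_mixture k w ps "- \<Delta>" \<tau>min \<delta> \<tau>
    using False assms by unfold_locales auto
  obtain m J where m: "real m \<le> 20 * real k * ln (1 / (\<delta> * \<tau>min))"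
    and intervals: "disjoint_intervals m J"
    and ratio: "\<forall>x\<in>(\<Union>j<m. J j). ereal (\<tau> / 32) \<le> ratio_t p (- \<Delta>) x"
    and mass: "prob_dens p {x. ereal \<tau> \<le> ratio_t p (- \<Delta>) x} \<le> prob_dens p (\<Union>j<m. J j) + 4 * \<delta>"
    using interval_cover_nonneg_shift by auto
  have "\<forall>x\<in>(\<Union>j<m. uminus ` J j). ereal (\<tau> / 32) \<le> ratio_t p \<Delta> x"
    using ratio ratio_t_reflect[OF symmetric_p, of "- \<Delta>"] by auto
  moreover have "prob_dens p {x. ereal \<tau> \<le> ratio_t p \<Delta> x} \<le> prob_dens p (\<Union>j<m. uminus ` J j) + 4 * \<delta>"
    using mass
    unfolding ratio_t_superlevel_reflect[OF symmetric_p, of "ereal \<tau>" \<Delta>] image_UN[symmetric]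
      prob_dens_reflect[OF p_measurable symmetric_p] .
  ultimately show ?thesis
    using m disjoint_intervals_reflect[OF intervals] by (intro exI[of _ m] exI[of _ "\<lambda>j. uminus ` J j"]) simp
qed

end

lemma four_le_div_square:
  fixes \<delta> t :: real
  assumes "0 < \<delta>" "0 < t" "t \<le> 1/2" "1 \<le> k"
  shows "4 * \<delta> \<le> \<delta> * k / t\<^sup>2"
proof -
  have "t\<^sup>2 \<le> (1/2)\<^sup>2" using assms by (intro power_mono) auto
  then have "4 * t\<^sup>2 \<le> k" using assms(4) by (simp add: power2_eq_square)
  then have "\<delta> * (4 * t\<^sup>2) \<le> \<delta> * k" using assms(1) by (intro mult_left_mono) auto
  then show ?thesis using assms(2) by (simp add: field_simps)
qed

theorem mainTheorem1:
  "\<exists>C1 C2 C3 C4 :: real. C1 > 0 \<and> C2 > 0 \<and> C3 > 0 \<and> C4 > 0 \<and>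
    (\<forall>(k::nat) (w::nat \<Rightarrow> real) (ps::nat \<Rightarrow> real \<Rightarrow> real) (\<Delta>::real)
       (\<tau>min::real) (\<delta>::real) (\<tau>::real).
       k \<ge> 1 \<and> (\<forall>i<k. w i \<ge> 0) \<and> (\<Sum>i<k. w i) = 1 \<and>
       (\<forall>i<k. is_density (ps i) \<and> log_concave (ps i) \<and> symmetric_fun (ps i)) \<and>
       0 < \<tau>min \<and> \<tau>min \<le> min (1 / real k) (1/2) \<and>
       0 < \<delta> \<and> \<delta> \<le> min (\<tau>min\<^sup>2 / real k) (1/2) \<and>
       \<tau>min \<le> \<tau> \<and> \<tau> \<le> 1
       \<longrightarrow>
       (let p = (\<lambda>x. \<Sum>i<k. w i * ps i x) in
        \<exists>(m::nat) (J::nat \<Rightarrow> real set).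
          real m \<le> C1 * real k * ln (1 / (\<delta> * \<tau>min)) \<and>
          (\<forall>j<m. is_interval (J j)) \<and>
          (\<forall>i<m. \<forall>j<m. i \<noteq> j \<longrightarrow> J i \<inter> J j = {}) \<and>
          (\<forall>x \<in> (\<Union>j<m. J j). ratio_t p \<Delta> x \<ge> ereal (C2 * \<tau>)) \<and>
          prob_dens p (\<Union>j<m. J j) \<ge>
            C3 * prob_dens p {x. ratio_t p \<Delta> x \<ge> ereal \<tau>} - C4 * \<delta> * real k / \<tau>min\<^sup>2))"
proof (rule exI[of _ 20], rule exI[of _ "1/32"], rule exI[of _ 1], rule exI[of _ 1],
    intro conjI allI impI, goal_cases)
  case (5 k w ps \<Delta> \<tau>min \<delta> \<tau>)
  interpret lc_mixture k w ps
    using 5 by unfold_locales auto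
  obtain m J where m: "real m \<le> 20 * real k * ln (1 / (\<delta> * \<tau>min))"
    and intervals: "disjoint_intervals m J"
    and ratio: "\<forall>x\<in>(\<Union>j<m. J j). ereal (\<tau> / 32) \<le> ratio_t p \<Delta> x"
    and mass: "prob_dens p {x. ereal \<tau> \<le> ratio_t p \<Delta> x} \<le> prob_dens p (\<Union>j<m. J j) + 4 * \<delta>"
    using interval_cover[of \<tau>min \<delta> \<tau> \<Delta>] 5 by auto
  have "4 * \<delta> \<le> \<delta> * real k / \<tau>min\<^sup>2"
    using four_le_div_square[of \<delta> \<tau>min "real k"] 5 by auto
  then have "1 * prob_dens p {x. ereal \<tau> \<le> ratio_t p \<Delta> x} - 1 * \<delta> * real k / \<tau>min\<^sup>2
      \<le> prob_dens p (\<Union>j<m. J j)"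
    using mass by simp
  moreover have "\<forall>x\<in>(\<Union>j<m. J j). ereal (1/32 * \<tau>) \<le> ratio_t p \<Delta> x"
    using ratio by simp
  ultimately show ?case
    unfolding Let_def p_def[symmetric] using m intervals unfolding disjoint_intervals_def by blast
qed auto

end
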